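(* In the social learning model, assume there exist $c>0$, $k>0$ and $x_0>0$ such that $G_-(-x)=c\,x^{-k}$ and $G_+(x)=1-c\,x^{-k}$ for all $x>x_0$. Then there exists $X>0$ such that for all $x\ge X$, $$|x+D_-(x)|\le x\qquad\text{and}\qquad |{-x}+D_+(-x)|\le x.$$ Equivalently, for every $t$, if $|\ell_t|\ge X$ and the action $a_t$ disagrees with the sign of $\ell_t$ (i.e., $a_t\ne a_{t-1}$, where $\ell_t$ has the sign of $a_{t-1}$), then $|\ell_{t+1}|\le|\ell_t|$.
   Context: Social learning model. A state $\theta\in\{-1,+1\}$ is drawn with $\mathbb{P}(\theta=+1)=\mathbb{P}(\theta=-1)=1/2$. Agents $t=1,2,\dots$ receive private signals $s_t\in\mathbb{R}$ that are i.i.d. conditionally on $\theta$, with CDF $F_+$ if $\theta=+1$ and $F_-$ if $\theta=-1$; $F_+$ and $F_-$ are mutually absolutely continuous. Let $L_t=\log\frac{\mathbb{P}(\theta=+1\mid s_t)}{\mathbb{P}(\theta=-1\mid s_t)}$ be the private log-likelihood ratio, and let $G_+$, $G_-$ denote the CDFs of $L_t$ conditional on $\theta=+1$, $\theta=-1$ respectively. Signals are assumed unbounded: for every $M\in\mathbb{R}$, $\mathbb{P}(L_t>M)>0$ and $\mathbb{P}(L_t<-M)>0$. Agent $t$ observes $a_1,\dots,a_{t-1}$ and her own signal and chooses $a_t\in\{-1,+1\}$ (utility $1$ if $a_t=\theta$, else $0$). The public belief is $\mu_t=\mathbb{P}(\theta=+1\mid a_1,\dots,a_{t-1})$ and $\ell_t=\log\frac{\mu_t}{1-\mu_t}$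 (so $\ell_1=0$). In equilibrium $a_t=+1$ iff $\ell_t+L_t>0$, and otherwise $a_t=-1$. Consequently $\ell_{t+1}=\ell_t+D_+(\ell_t)$ if $a_t=+1$ and $\ell_{t+1}=\ell_t+D_-(\ell_t)$ if $a_t=-1$, where $D_+(x)=\log\frac{1-G_+(-x)}{1-G_-(-x)}$ and $D_-(x)=\log\frac{G_+(-x)}{G_-(-x)}$. We write $\mathbb{P}_+(\cdot)=\mathbb{P}(\cdot\mid\theta=+1)$ and $\mathbb{E}_+$ for the corresponding expectation. *)

theory Defs
  imports "HOL-Probability.Probability"
begin

text \<open>Fp, Fm are the conditional laws of the private signal
  s in the real line given theta = +1 and theta = -1 respectively.
  With the uniform prior, the posterior odds P(theta=+1|s)/P(theta=-1|s) equal the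
  Radon-Nikodym derivative dFp/dFm at s (RN_deriv Fm Fp is the density of Fp
  with respect to Fm).\<close>

definition signal_model :: "real measure \<Rightarrow> real measure \<Rightarrow> bool" where
  "signal_model Fp Fm \<longleftrightarrow>
     prob_space Fp \<and> prob_space Fm \<and>
     sets Fp = sets borel \<and> sets Fm = sets borel \<and>
     absolutely_continuous Fp Fm \<and> absolutely_continuous Fm Fp"

definition LLR :: "real measure \<Rightarrow> real measure \<Rightarrow> real \<Rightarrow> real" where
  "LLR Fp Fm s = ln (enn2real (RN_deriv Fm Fp s))"

definition Gp :: "real measure \<Rightarrow> real measure \<Rightarrow> real \<Rightarrow> real" where
  "Gp Fp Fm x = measure Fp {s \<in> space Fp. LLR Fp Fm s \<le> x}"

definition Gm :: "real measure \<Rightarrow> real measure \<Rightarrow> real \<Rightarrow> real" where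
  "Gm Fp Fm x = measure Fm {s \<in> space Fm. LLR Fp Fm s \<le> x}"

text \<open>Unbounded signals: P(L > M) > 0 and P(L < -M) > 0 for all M, where P is
  the unconditional law (uniform prior over the state).\<close>
definition unbounded_signals :: "real measure \<Rightarrow> real measure \<Rightarrow> bool" where
  "unbounded_signals Fp Fm \<longleftrightarrow>
     (\<forall>M::real.
        (measure Fp {s \<in> space Fp. LLR Fp Fm s > M} + measure Fm {s \<in> space Fm. LLR Fp Fm s > M}) / 2 > 0 \<and>
        (measure Fp {s \<in> space Fp. LLR Fp Fm s < -M} + measure Fm {s \<in> space Fm. LLR Fp Fm s < -M}) / 2 > 0)"

definition Dplus :: "real measure \<Rightarrow> real measure \<Rightarrow> real \<Rightarrow> real" where
  "Dplus Fp Fm x = ln ((1 - Gp Fp Fm (-x)) / (1 - Gm Fp Fm (-x)))"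

definition Dminus :: "real measure \<Rightarrow> real measure \<Rightarrow> real \<Rightarrow> real" where
  "Dminus Fp Fm x = ln (Gp Fp Fm (-x) / Gm Fp Fm (-x))"

end

theory Submission
  imports Defs
begin

text \<open>On the event \<open>{L \<le> -x}\<close> the density \<open>dFp/dFm = exp L\<close> is at most \<open>exp (-x)\<close>, so
  \<open>G\<^sub>+(-x) \<le> exp (-x) G\<^sub>-(-x)\<close>, i.e. \<open>D\<^sub>-(x) \<le> -x\<close>. On the slab \<open>{-3x/2 < L \<le> -x}\<close> the density
  is at least \<open>exp (-3x/2)\<close>, and the power law puts the fixed fraction \<open>q = 1 - (3/2)\<^sup>-\<^sup>k\<close> of the
  mass \<open>G\<^sub>-(-x)\<close> there, so \<open>D\<^sub>-(x) \<ge> -3x/2 + ln q \<ge> -2x\<close> once \<open>x \<ge> -2 ln q\<close>. The upper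
  tail is symmetric: \<open>x \<le> D\<^sub>+(-x) \<le> 3x/2 - ln q \<le> 2x\<close>.\<close>

lemma signal_model_prob_space:
  assumes "signal_model Fp Fm"
  shows "prob_space Fp" "prob_space Fm"
  using assms by (auto simp: signal_model_def)

lemma signal_model_sets:
  assumes "signal_model Fp Fm"
  shows "sets Fp = sets borel" "sets Fm = sets borel"
  using assms by (auto simp: signal_model_def)

lemma signal_model_space:
  assumes "signal_model Fp Fm"
  shows "space Fp = UNIV" "space Fm = UNIV"
  using signal_model_sets[OF assms] by (metis sets_eq_imp_space_eq space_borel)+

lemma signal_model_density_RN_deriv:
  assumes "signal_model Fp Fm"
  shows "density Fm (RN_deriv Fm Fp) = Fp"
  using assms signal_model_prob_space[OF assms]
  by (intro sigma_finite_measure.density_RN_deriv)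
     (auto simp: signal_model_def prob_space_imp_sigma_finite)

lemma LLR_measurable [measurable]:
  assumes "signal_model Fp Fm"
  shows "LLR Fp Fm \<in> borel_measurable borel"
proof -
  have "RN_deriv Fm Fp \<in> borel_measurable borel"
    using borel_measurable_RN_deriv[of Fm Fp] signal_model_sets(2)[OF assms]
      measurable_cong_sets by blast
  then show ?thesis unfolding LLR_def[abs_def] by measurable
qed

text \<open>Where \<open>LLR = 0\<close> the density may be \<open>0\<close> or \<open>\<infinity>\<close> (\<open>ln 0 = 0\<close> and \<open>enn2real \<infinity> = 0\<close>),
  so it is recovered from the log-likelihood ratio only off that set.\<close>
lemma RN_deriv_eq_exp_LLR:
  assumes "LLR Fp Fm s \<noteq> 0"
  shows "RN_deriv Fm Fp s = ennreal (exp (LLR Fp Fm s))"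
proof -
  let ?r = "enn2real (RN_deriv Fm Fp s)"
  have "?r \<noteq> 0" using assms by (auto simp: LLR_def)
  then have r: "?r > 0" using enn2real_nonneg[of "RN_deriv Fm Fp s"] by linarith
  then have "RN_deriv Fm Fp s = ennreal ?r" by (cases "RN_deriv Fm Fp s") auto
  then show ?thesis using r by (simp add: LLR_def)
qed

lemma emeasure_eq_nn_integral_RN_deriv:
  assumes "signal_model Fp Fm" "S \<in> sets borel"
  shows "emeasure Fp S = (\<integral>\<^sup>+ s. RN_deriv Fm Fp s * indicator S s \<partial>Fm)"
  using assms signal_model_sets(2)[OF assms(1)]
  by (subst signal_model_density_RN_deriv[OF assms(1), symmetric]) (auto intro: emeasure_density)

lemma signal_model_emeasure_eq_measure:
  assumes "signal_model Fp Fm"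
  shows "emeasure Fp S = ennreal (measure Fp S)" "emeasure Fm S = ennreal (measure Fm S)"
  using signal_model_prob_space[OF assms]
  by (auto intro: finite_measure.emeasure_eq_measure prob_space.finite_measure)

lemma exp_mult_measure_le_measure:
  assumes "signal_model Fp Fm" "S \<in> sets borel"
    and "\<And>s. s \<in> S \<Longrightarrow> a \<le> LLR Fp Fm s \<and> LLR Fp Fm s \<noteq> 0"
  shows "exp a * measure Fm S \<le> measure Fp S"
proof -
  have "ennreal (exp a) * emeasure Fm S = (\<integral>\<^sup>+ s. ennreal (exp a) * indicator S s \<partial>Fm)"
    using assms(2) signal_model_sets(2)[OF assms(1)] by (simp add: nn_integral_cmult_indicator)
  also have "\<dots> \<le> (\<integral>\<^sup>+ s. RN_deriv Fm Fp s * indicator S s \<partial>Fm)"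
    using assms(3) RN_deriv_eq_exp_LLR[of Fp Fm]
    by (intro nn_integral_mono) (auto simp: indicator_def ennreal_leI)
  also have "\<dots> = emeasure Fp S"
    using emeasure_eq_nn_integral_RN_deriv[OF assms(1,2)] by simp
  finally show ?thesis
    by (simp add: signal_model_emeasure_eq_measure[OF assms(1)] ennreal_mult'[symmetric])
qed

lemma measure_le_exp_mult_measure:
  assumes "signal_model Fp Fm" "S \<in> sets borel"
    and "\<And>s. s \<in> S \<Longrightarrow> LLR Fp Fm s \<le> b \<and> LLR Fp Fm s \<noteq> 0"
  shows "measure Fp S \<le> exp b * measure Fm S"
proof -
  have "emeasure Fp S = (\<integral>\<^sup>+ s. RN_deriv Fm Fp s * indicator S s \<partial>Fm)"
    using emeasure_eq_nn_integral_RN_deriv[OF assms(1,2)] .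
  also have "\<dots> \<le> (\<integral>\<^sup>+ s. ennreal (exp b) * indicator S s \<partial>Fm)"
    using assms(3) RN_deriv_eq_exp_LLR[of Fp Fm]
    by (intro nn_integral_mono) (auto simp: indicator_def ennreal_leI)
  also have "\<dots> = ennreal (exp b) * emeasure Fm S"
    using assms(2) signal_model_sets(2)[OF assms(1)] by (simp add: nn_integral_cmult_indicator)
  finally show ?thesis
    by (simp add: signal_model_emeasure_eq_measure[OF assms(1)] ennreal_mult'[symmetric])
qed

lemma measure_slab_eq_diff:
  fixes f :: "real \<Rightarrow> real"
  assumes "finite_measure M" "sets M = sets borel" "f \<in> borel_measurable borel" "a \<le> b"
  shows "measure M {s. a < f s \<and> f s \<le> b} = measure M {s. f s \<le> b} - measure M {s. f s \<le> a}"
proof -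
  have "{s. a < f s \<and> f s \<le> b} = {s. f s \<le> b} - {s. f s \<le> a}" by auto
  then show ?thesis
    using assms by (simp add: finite_measure.finite_measure_Diff subset_eq)
qed

lemma measure_gt_eq_one_minus_measure_le:
  fixes f :: "real \<Rightarrow> real"
  assumes "prob_space M" "sets M = sets borel" "f \<in> borel_measurable borel"
  shows "measure M {s. a < f s} = 1 - measure M {s. f s \<le> a}"
proof -
  have "space M = UNIV" using assms(2) by (metis sets_eq_imp_space_eq space_borel)
  then have "{s. a < f s} = space M - {s. f s \<le> a}" by auto
  then show ?thesis using assms by (simp add: prob_space.prob_compl)
qed

lemma Gp_eq: "signal_model Fp Fm \<Longrightarrow> Gp Fp Fm a = measure Fp {s. LLR Fp Fm s \<le> a}"
  by (simp add: Gp_def signal_model_space)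

lemma Gm_eq: "signal_model Fp Fm \<Longrightarrow> Gm Fp Fm a = measure Fm {s. LLR Fp Fm s \<le> a}"
  by (simp add: Gm_def signal_model_space)

lemma Gp_le_exp_mult_Gm:
  assumes "signal_model Fp Fm" "0 < x"
  shows "Gp Fp Fm (-x) \<le> exp (-x) * Gm Fp Fm (-x)"
  using assms unfolding Gp_eq[OF assms(1)] Gm_eq[OF assms(1)]
  by (intro measure_le_exp_mult_measure) auto

lemma exp_mult_Gm_diff_le_Gp:
  assumes sm: "signal_model Fp Fm" and "0 < x" "x \<le> b"
  shows "exp (-b) * (Gm Fp Fm (-x) - Gm Fp Fm (-b)) \<le> Gp Fp Fm (-x)"
proof -
  let ?S = "{s. -b < LLR Fp Fm s \<and> LLR Fp Fm s \<le> -x}"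
  have "Gm Fp Fm (-x) - Gm Fp Fm (-b) = measure Fm ?S"
    using assms signal_model_prob_space[OF sm] signal_model_sets[OF sm]
    by (simp add: Gm_eq measure_slab_eq_diff prob_space.finite_measure)
  moreover have "exp (-b) * measure Fm ?S \<le> measure Fp ?S"
    using assms by (intro exp_mult_measure_le_measure) auto
  moreover have "measure Fp ?S \<le> Gp Fp Fm (-x)"
    using sm signal_model_prob_space[OF sm] signal_model_sets[OF sm]
    by (auto simp: Gp_eq intro!: finite_measure.finite_measure_mono prob_space.finite_measure)
  ultimately show ?thesis by simp
qed

lemma exp_mult_tail_Gm_le_tail_Gp:
  assumes sm: "signal_model Fp Fm" and "0 < x"
  shows "exp x * (1 - Gm Fp Fm x) \<le> 1 - Gp Fp Fm x"
proof -
  have "exp x * measure Fm {s. x < LLR Fp Fm s} \<le> measure Fp {s. x < LLR Fp Fm s}"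
    using assms by (intro exp_mult_measure_le_measure) auto
  then show ?thesis
    using signal_model_prob_space[OF sm] signal_model_sets[OF sm]
    by (simp add: Gp_eq[OF sm] Gm_eq[OF sm] measure_gt_eq_one_minus_measure_le LLR_measurable[OF sm])
qed

lemma Gp_diff_le_exp_mult_tail_Gm:
  assumes sm: "signal_model Fp Fm" and "0 < x" "x \<le> b"
  shows "Gp Fp Fm b - Gp Fp Fm x \<le> exp b * (1 - Gm Fp Fm x)"
proof -
  let ?S = "{s. x < LLR Fp Fm s \<and> LLR Fp Fm s \<le> b}"
  have "Gp Fp Fm b - Gp Fp Fm x = measure Fp ?S"
    using assms signal_model_prob_space[OF sm] signal_model_sets[OF sm]
    by (simp add: Gp_eq measure_slab_eq_diff prob_space.finite_measure)
  moreover have "measure Fp ?S \<le> exp b * measure Fm ?S"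
    using assms by (intro measure_le_exp_mult_measure) auto
  moreover have "measure Fm ?S \<le> 1 - Gm Fp Fm x"
    using sm signal_model_prob_space[OF sm] signal_model_sets[OF sm]
    by (auto simp: Gm_eq measure_gt_eq_one_minus_measure_le[symmetric] LLR_measurable[OF sm]
        intro!: finite_measure.finite_measure_mono prob_space.finite_measure)
  then have "exp b * measure Fm ?S \<le> exp b * (1 - Gm Fp Fm x)" by simp
  ultimately show ?thesis by linarith
qed

lemma ln_divide_between:
  fixes p g :: real
  assumes "0 < g" "exp a * g \<le> p" "p \<le> exp b * g"
  shows "a \<le> ln (p / g)" "ln (p / g) \<le> b"
proof -
  have "0 < exp a * g" using assms(1) by simp
  then have p: "0 < p" using assms(2) by linarith
  have "exp a \<le> p / g" "p / g \<le> exp b" using assms by (simp_all add: field_simps)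
  then show "a \<le> ln (p / g)" "ln (p / g) \<le> b"
    using p assms(1) by (simp_all add: ln_ge_iff ln_le_cancel_iff[of _ "exp b", symmetric])
qed

lemma powr_tail_diff:
  fixes c k x r :: real
  assumes "0 < x" "0 < r"
  shows "c * x powr (-k) - c * (r * x) powr (-k) = (1 - r powr (-k)) * (c * x powr (-k))"
  using assms by (simp add: powr_mult algebra_simps)

lemma one_minus_powr_neg_pos:
  fixes k r :: real
  assumes "1 < r" "0 < k"
  shows "0 < 1 - r powr (-k)"
  using assms by (simp add: powr_minus inverse_less_1_iff)

lemma abs_add_Dminus_le:
  assumes sm: "signal_model Fp Fm" and "0 < c" "0 < k"
    and tails: "\<forall>x. x > x0 \<longrightarrow> Gm Fp Fm (-x) = c * x powr (-k) \<and> Gp Fp Fm x = 1 - c * x powr (-k)"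
    and x: "x0 < x" "0 < x" "-2 * ln (1 - (3/2) powr (-k)) \<le> x"
  shows "\<bar>x + Dminus Fp Fm x\<bar> \<le> x"
proof -
  define q :: real where "q = 1 - (3/2) powr (-k)"
  define g where "g = c * x powr (-k)"
  have q: "0 < q" unfolding q_def using \<open>0 < k\<close> by (intro one_minus_powr_neg_pos) auto
  have Gm_x: "Gm Fp Fm (-x) = g" using tails x by (simp add: g_def)
  have "Gm Fp Fm (-x) - Gm Fp Fm (-(3/2 * x)) = q * g"
    using tails x powr_tail_diff[of x "3/2" c k] by (simp add: g_def q_def)
  then have "exp (-(3/2 * x)) * (q * g) \<le> Gp Fp Fm (-x)"
    using exp_mult_Gm_diff_le_Gp[OF sm \<open>0 < x\<close>, of "3/2 * x"] x by simp
  moreover have "exp (-(3/2 * x) + ln q) * g = exp (-(3/2 * x)) * (q * g)"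
    by (simp only: exp_add exp_ln[OF q] mult.assoc)
  ultimately have lo: "exp (-(3/2 * x) + ln q) * g \<le> Gp Fp Fm (-x)" by linarith
  have hi: "Gp Fp Fm (-x) \<le> exp (-x) * g"
    using Gp_le_exp_mult_Gm[OF sm \<open>0 < x\<close>] Gm_x by simp
  have "0 < g" using \<open>0 < c\<close> \<open>0 < x\<close> by (simp add: g_def)
  then have "-(3/2 * x) + ln q \<le> Dminus Fp Fm x" "Dminus Fp Fm x \<le> -x"
    using ln_divide_between[OF _ lo hi] by (simp_all add: Dminus_def Gm_x)
  then show ?thesis using x unfolding q_def by linarith
qed

lemma abs_add_Dplus_le:
  assumes sm: "signal_model Fp Fm" and "0 < c" "0 < k"
    and tails: "\<forall>x. x > x0 \<longrightarrow> Gm Fp Fm (-x) = c * x powr (-k) \<and> Gp Fp Fm x = 1 - c * x powr (-k)"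
    and x: "x0 < x" "0 < x" "-2 * ln (1 - (3/2) powr (-k)) \<le> x"
  shows "\<bar>-x + Dplus Fp Fm (-x)\<bar> \<le> x"
proof -
  define q :: real where "q = 1 - (3/2) powr (-k)"
  define p where "p = c * x powr (-k)"
  define g where "g = 1 - Gm Fp Fm x"
  have q: "0 < q" unfolding q_def using \<open>0 < k\<close> by (intro one_minus_powr_neg_pos) auto
  have Gp_x: "1 - Gp Fp Fm x = p" using tails x by (simp add: p_def)
  have "Gp Fp Fm (3/2 * x) - Gp Fp Fm x = q * p"
    using tails x powr_tail_diff[of x "3/2" c k] by (simp add: p_def q_def)
  then have up: "q * p \<le> exp (3/2 * x) * g"
    using Gp_diff_le_exp_mult_tail_Gm[OF sm \<open>0 < x\<close>, of "3/2 * x"] x by (simp add: g_def)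
  have "0 < q * p" using q \<open>0 < c\<close> \<open>0 < x\<close> by (simp add: p_def)
  then have "0 < exp (3/2 * x) * g" using up by linarith
  then have g: "0 < g" by (simp add: zero_less_mult_iff)
  have lo: "exp x * g \<le> p"
    using exp_mult_tail_Gm_le_tail_Gp[OF sm \<open>0 < x\<close>] Gp_x by (simp add: g_def)
  have "exp (3/2 * x - ln q) * g = exp (3/2 * x) * g / q"
    by (simp only: exp_diff exp_ln[OF q] times_divide_eq_left)
  then have hi: "p \<le> exp (3/2 * x - ln q) * g"
    using up q by (simp add: pos_le_divide_eq mult.commute)
  have "x \<le> Dplus Fp Fm (-x)" "Dplus Fp Fm (-x) \<le> 3/2 * x - ln q"
    using ln_divide_between[OF g lo hi] by (simp_all add: Dplus_def Gp_x g_def)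
  then show ?thesis using x unfolding q_def by linarith
qed

theorem lemma10:
  fixes Fp Fm :: "real measure" and c k x0 :: real
  assumes "signal_model Fp Fm"
    and "unbounded_signals Fp Fm"
    and "c > 0" and "k > 0" and "x0 > 0"
    and "\<forall>x. x > x0 \<longrightarrow> Gm Fp Fm (-x) = c * x powr (-k) \<and> Gp Fp Fm x = 1 - c * x powr (-k)"
  shows "\<exists>X>0. \<forall>x\<ge>X. \<bar>x + Dminus Fp Fm x\<bar> \<le> x \<and> \<bar>-x + Dplus Fp Fm (-x)\<bar> \<le> x"
proof (intro exI conjI allI impI)
  define X where "X = max (x0 + 1) (-2 * ln (1 - (3/2) powr (-k)))"
  show "X > 0" using \<open>x0 > 0\<close> by (simp add: X_def)
  fix x assume "x \<ge> X"
  then have "x0 < x" "0 < x" "-2 * ln (1 - (3/2) powr (-k)) \<le> x"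
    using \<open>x0 > 0\<close> by (auto simp: X_def)
  then show "\<bar>x + Dminus Fp Fm x\<bar> \<le> x" "\<bar>-x + Dplus Fp Fm (-x)\<bar> \<le> x"
    using abs_add_Dminus_le abs_add_Dplus_le assms by blast+
qed

end
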